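(* Let $p\ne q$ be primes and $G=\mathbb{Z}_p^2\times\mathbb{Z}_q^2$. If $S\subseteq G$ is spectral and $|S|=pq$, then $S$ is a tile of $G$.
   Context: For $w=(u,v)\in G$ ($u\in\mathbb{Z}_p^2$, $v\in\mathbb{Z}_q^2$) define the character $\chi_w(a,b)=\exp\big(2\pi i(\tfrac{u\cdot a}{p}+\tfrac{v\cdot b}{q})\big)$, and $\chi(S)=\sum_{s\in S}\chi(s)$. $S$ is spectral if there is $\Lambda\subseteq G$ with $|\Lambda|=|S|$ and $\chi_{\lambda-\lambda'}(S)=0$ for all distinct $\lambda,\lambda'\in\Lambda$. $S$ is a tile if there is $T\subseteq G$ with $S+T=G$ and $|S||T|=|G|$. *)

theory Defs
  imports "HOL-Analysis.Analysis"
begin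

type_synonym elt = "(int \<times> int) \<times> (int \<times> int)"

definition grp :: "int \<Rightarrow> int \<Rightarrow> elt set" where
  "grp p q = ({0..<p} \<times> {0..<p}) \<times> ({0..<q} \<times> {0..<q})"

definition gadd :: "int \<Rightarrow> int \<Rightarrow> elt \<Rightarrow> elt \<Rightarrow> elt" where
  "gadd p q x y =
     (((fst (fst x) + fst (fst y)) mod p, (snd (fst x) + snd (fst y)) mod p),
      ((fst (snd x) + fst (snd y)) mod q, (snd (snd x) + snd (snd y)) mod q))"

definition gsub :: "int \<Rightarrow> int \<Rightarrow> elt \<Rightarrow> elt \<Rightarrow> elt" where
  "gsub p q x y =
     (((fst (fst x) - fst (fst y)) mod p, (snd (fst x) - snd (fst y)) mod p),
      ((fst (snd x) - fst (snd y)) mod q, (snd (snd x) - snd (snd y)) mod q))"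

definition chr :: "int \<Rightarrow> int \<Rightarrow> elt \<Rightarrow> elt \<Rightarrow> complex" where
  "chr p q w s =
     exp (2 * pi * \<i> * complex_of_real
       ((fst (fst w) * fst (fst s) + snd (fst w) * snd (fst s)) / p
      + (fst (snd w) * fst (snd s) + snd (snd w) * snd (snd s)) / q))"

definition chr_set :: "int \<Rightarrow> int \<Rightarrow> elt \<Rightarrow> elt set \<Rightarrow> complex" where
  "chr_set p q w S = (\<Sum>s\<in>S. chr p q w s)"

definition spectral :: "int \<Rightarrow> int \<Rightarrow> elt set \<Rightarrow> bool" where
  "spectral p q S \<longleftrightarrow>
     (\<exists>L. L \<subseteq> grp p q \<and> card L = card S \<and>
        (\<forall>l\<in>L. \<forall>m\<in>L. l \<noteq> m \<longrightarrow> chr_set p q (gsub p q l m) S = 0))"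

definition tile :: "int \<Rightarrow> int \<Rightarrow> elt set \<Rightarrow> bool" where
  "tile p q S \<longleftrightarrow>
     (\<exists>T. T \<subseteq> grp p q \<and> {gadd p q s t | s t. s \<in> S \<and> t \<in> T} = grp p q
        \<and> card S * card T = card (grp p q))"

end

(* Let L be a spectrum of S.  Counting the Gram matrices of the characters of L on S in two ways
   shows that, conversely, S is a spectrum of L.
   If chi_(u,v) vanishes on L, where |L| = pq, then so do all chi_(ku,lv) with p, q not dividing
   k, l: these values are Galois conjugates (Dedekind's irreducibility argument for cyclotomic
   polynomials).  Fourier inversion then forces L to be equidistributed modulo p or modulo q along
   the respective component, i.e. chi_(u,0)(L) = 0 or chi_(0,v)(L) = 0.
   Now fix u, v with chi_(u,0)(L) <> 0 <> chi_(0,v)(L); they exist as p^2 does not divide pq.  By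
   the above, no difference of two elements of S lies, componentwise, on the lines through u and
   v.  So y |-> (det(u, y_p), det(v, y_q)) is injective on S, S is a complete system of
   representatives modulo the product of these two lines, and S tiles G with it. *)

theory Submission
  imports Defs "HOL-Computational_Algebra.Polynomial" "HOL-Number_Theory.Cong"
begin

section \<open>Integer polynomials at roots of unity\<close>

definition ipoly :: "int poly \<Rightarrow> 'a::comm_ring_1 \<Rightarrow> 'a" where
  "ipoly G z = poly (map_poly of_int G) z"

lemma ipoly_add [simp]: "ipoly (G + H) z = ipoly G z + ipoly H z"
proof -
  have "map_poly of_int (G + H) = map_poly of_int G + (map_poly of_int H :: 'a poly)"
    by (rule poly_eqI) (simp add: coeff_map_poly)
  then show ?thesis by (simp add: ipoly_def)
qed

lemma ipoly_diff [simp]: "ipoly (G - H) z = ipoly G z - ipoly H z"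
proof -
  have "map_poly of_int (G - H) = map_poly of_int G - (map_poly of_int H :: 'a poly)"
    by (rule poly_eqI) (simp add: coeff_map_poly)
  then show ?thesis by (simp add: ipoly_def)
qed

lemma ipoly_mult [simp]: "ipoly (G * H) z = ipoly G z * ipoly H z"
proof -
  have "map_poly of_int (G * H) = map_poly of_int G * (map_poly of_int H :: 'a poly)"
    by (rule poly_eqI) (simp add: coeff_map_poly coeff_mult)
  then show ?thesis by (simp add: ipoly_def)
qed

lemma ipoly_0 [simp]: "ipoly 0 z = 0"
  and ipoly_1 [simp]: "ipoly 1 z = 1"
  and ipoly_const [simp]: "ipoly [:c:] z = of_int c"
  and ipoly_monom [simp]: "ipoly (monom c n) z = of_int c * z ^ n"
  and ipoly_smult [simp]: "ipoly (smult c G) z = of_int c * ipoly G z"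
  by (simp_all add: ipoly_def map_poly_pCons map_poly_monom poly_monom map_poly_smult)

lemma ipoly_power [simp]: "ipoly (G ^ n) z = ipoly G z ^ n"
  by (induction n) simp_all

lemma ipoly_sum: "ipoly (\<Sum>x\<in>A. F x) z = (\<Sum>x\<in>A. ipoly (F x) z)"
  by (induction A rule: infinite_finite_induct) simp_all

lemma ipoly_pcompose: "ipoly (pcompose G H) z = ipoly G (ipoly H z)"
proof (induction G)
  case (pCons a G)
  have "ipoly (pCons a G) w = of_int a + w * ipoly G w" for w :: 'a
    by (simp add: ipoly_def map_poly_pCons)
  then show ?case using pCons by (simp add: pcompose_pCons)
qed simp

lemma power_add_prime:
  fixes a b :: "'a::comm_ring_1"
  assumes r: "prime r"
  obtains E where "(a + b) ^ r = a ^ r + b ^ r + of_nat r * E"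
proof -
  have r0: "r > 0" using prime_gt_0_nat[OF r] .
  define E where "E = (\<Sum>k\<in>{1..<r}. of_nat ((r choose k) div r) * a ^ k * b ^ (r - k))"
  have "{..r} = insert 0 (insert r {1..<r})" using r0 by auto
  then have "(a + b) ^ r = (\<Sum>k\<in>insert 0 (insert r {1..<r}). of_nat (r choose k) * a ^ k * b ^ (r - k))"
    by (simp only: binomial_ring)
  also have "\<dots> = b ^ r + a ^ r + (\<Sum>k\<in>{1..<r}. of_nat (r choose k) * a ^ k * b ^ (r - k))"
    using r0 by simp
  also have "(\<Sum>k\<in>{1..<r}. of_nat (r choose k) * a ^ k * b ^ (r - k)) = of_nat r * E"
    unfolding E_def sum_distrib_left
  proof (intro sum.cong refl)
    fix k assume "k \<in> {1..<r}"
    then have "r * ((r choose k) div r) = r choose k" using r by (simp add: dvd_choose_prime)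
    then show "of_nat (r choose k) * a ^ k * b ^ (r - k)
        = of_nat r * (of_nat ((r choose k) div r) * a ^ k * b ^ (r - k))"
      by (metis mult.assoc of_nat_mult)
  qed
  finally show ?thesis by (intro that) (simp add: algebra_simps)
qed

lemma prime_dvd_power_self_diff:
  fixes c :: int
  assumes r: "prime r"
  shows "int r dvd c ^ r - c"
proof -
  have r0: "r > 0" using prime_gt_0_nat[OF r] .
  have nat_case: "int r dvd int n ^ r - int n" for n
  proof (induction n)
    case 0
    then show ?case using r0 by (simp add: power_0_left)
  next
    case (Suc n)
    obtain E where E: "(int n + 1) ^ r = int n ^ r + 1 ^ r + of_nat r * E"
      using power_add_prime[OF r] .
    have "int (Suc n) ^ r - int (Suc n) = (int n ^ r - int n) + int r * E"
      using E by (simp add: add.commute)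
    then show ?case using Suc.IH by (simp only:) (intro dvd_add dvd_triv_left)
  qed
  have "[c ^ r - c = (c mod int r) ^ r - c mod int r] (mod int r)"
    by (intro cong_diff cong_pow) (simp_all add: cong_def)
  moreover have "c mod int r = int (nat (c mod int r))"
    using r0 by simp
  ultimately show ?thesis
    using nat_case[of "nat (c mod int r)"] by (metis cong_dvd_iff)
qed

lemma int_poly_power_prime:
  fixes G :: "int poly"
  assumes r: "prime r"
  obtains E where "G ^ r = pcompose G (monom 1 r) + smult (int r) E"
proof -
  have "\<exists>E. G ^ r = pcompose G (monom 1 r) + smult (int r) E"
  proof (induction G)
    case 0
    then show ?case using prime_gt_0_nat[OF r] by (simp add: power_0_left)
  next
    case (pCons c G)
    then obtain E where E: "G ^ r = pcompose G (monom 1 r) + smult (int r) E" by blast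
    obtain E' where E': "([:c:] + monom 1 1 * G) ^ r = [:c:] ^ r + (monom 1 1 * G) ^ r + of_nat r * E'"
      using power_add_prime[OF r] .
    obtain e where "c ^ r - c = int r * e"
      using prime_dvd_power_self_diff[OF r, of c] by (elim dvdE)
    then have cr: "[:c ^ r:] = [:c:] + smult (int r) [:e:]" by simp
    have "pCons c G = [:c:] + monom 1 1 * G"
      by (simp add: monom_altdef)
    then have "pCons c G ^ r = [:c ^ r:] + monom 1 r * G ^ r + smult (int r) E'"
      using E' by (simp add: power_mult_distrib poly_const_pow monom_power of_nat_poly)
    also have "\<dots> = pcompose (pCons c G) (monom 1 r) + smult (int r) ([:e:] + monom 1 r * E + E')"
      by (simp add: cr E pcompose_pCons algebra_simps smult_add_right flip: add_pCons)
    finally show ?case by blast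
  qed
  then show ?thesis using that by blast
qed

definition is_min_int_poly :: "'a::comm_ring_1 \<Rightarrow> int poly \<Rightarrow> bool" where
  "is_min_int_poly z f \<longleftrightarrow> lead_coeff f = 1 \<and> ipoly f z = 0 \<and> (\<forall>G. ipoly G z = 0 \<longrightarrow> f dvd G)"

lemma min_degree_root_pseudo_dvd:
  fixes z :: "'a::comm_ring_1"
  assumes P: "P \<noteq> 0" "ipoly P z = 0"
    and min: "\<And>R. R \<noteq> 0 \<Longrightarrow> ipoly R z = 0 \<Longrightarrow> degree P \<le> degree R"
    and G: "ipoly G z = 0"
  shows "P dvd smult (lead_coeff P ^ (Suc (degree G) - degree P)) G"
proof -
  obtain Q R where QR: "pseudo_divmod G P = (Q, R)" by fastforce
  note division = pseudo_divmod[OF P(1) QR]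
  have "ipoly R z = 0"
    using arg_cong[OF division(1), of "\<lambda>H. ipoly H z"] P(2) G by simp
  then have "R = 0" using division(2) min by fastforce
  then show ?thesis using division(1) by simp
qed

lemma lead_coeff_primitive_dvd_monic:
  fixes P M :: "int poly"
  assumes P: "content P = 1" and M: "lead_coeff M = 1" and dvd: "P dvd smult a M" and "a \<noteq> 0"
  shows "\<bar>lead_coeff P\<bar> = 1"
proof -
  have "content M dvd 1" using content_dvd_coeff[of M "degree M"] M by simp
  then have "content M = 1" by (metis is_unit_normalize normalize_content)
  have "primitive_part P dvd primitive_part (smult a M)" using dvd by blast
  then obtain H where "smult (unit_factor a) M = P * H"
    using P \<open>content M = 1\<close> by (auto simp: primitive_part_smult primitive_part_prim)
  then have "unit_factor a = lead_coeff P * lead_coeff H"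
    using M by (metis lead_coeff_mult lead_coeff_smult mult.right_neutral)
  then have "lead_coeff P dvd unit_factor a" by simp
  moreover have "unit_factor a dvd 1" using \<open>a \<noteq> 0\<close> by (rule unit_factor_is_unit)
  ultimately have "lead_coeff P dvd 1" by (rule dvd_trans)
  then show ?thesis by simp
qed

text \<open>A non-zero root polynomial of least degree, made primitive, divides a constant multiple of
  \<open>X\<^sup>n - 1\<close> by pseudo-division; by Gauss's lemma it is then monic up to sign.\<close>

lemma exists_min_int_poly:
  fixes z :: "'a::{idom, ring_char_0}"
  assumes "z ^ n = 1" and "n > 0"
  obtains f where "is_min_int_poly z f"
proof -
  define Xn where "Xn = (monom 1 n - 1 :: int poly)"
  have coeff_Xn: "coeff Xn n = 1" using assms(2) by (simp add: Xn_def)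
  have "degree Xn \<le> n"
    unfolding Xn_def by (rule order.trans[OF degree_diff_le_max]) (simp add: degree_monom_le)
  with coeff_Xn have "degree Xn = n" by (simp add: le_antisym le_degree)
  with coeff_Xn have Xn: "lead_coeff Xn = 1" "ipoly Xn z = 0"
    using assms by (simp_all add: Xn_def)
  obtain P0 where P0: "P0 \<noteq> 0 \<and> ipoly P0 z = 0"
    and P0_min: "\<And>R. R \<noteq> 0 \<and> ipoly R z = 0 \<Longrightarrow> degree P0 \<le> degree R"
    using ex_has_least_nat[of "\<lambda>R. R \<noteq> 0 \<and> ipoly R z = 0" Xn degree] Xn by force
  define P where "P = primitive_part P0"
  have "of_int (content P0) * ipoly P z = 0"
    using P0 by (simp add: P_def flip: ipoly_smult)
  then have P: "P \<noteq> 0" "ipoly P z = 0" "degree P = degree P0" "content P = 1"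
    using P0 by (simp_all add: P_def)
  have P_min: "degree P \<le> degree R" if "R \<noteq> 0" "ipoly R z = 0" for R
    using P0_min that P(3) by simp
  have "P dvd smult (lead_coeff P ^ (Suc (degree Xn) - degree P)) Xn"
    by (rule min_degree_root_pseudo_dvd[OF P(1,2) P_min Xn(2)])
  moreover have "lead_coeff P ^ (Suc (degree Xn) - degree P) \<noteq> 0" using P(1) by simp
  ultimately have "\<bar>lead_coeff P\<bar> = 1" by (rule lead_coeff_primitive_dvd_monic[OF P(4) Xn(1)])
  then have "lead_coeff P * lead_coeff P = 1" using abs_mult_self_eq[of "lead_coeff P"] by simp
  define f where "f = smult (lead_coeff P) P"
  have f: "lead_coeff f = 1" "ipoly f z = 0" "degree f = degree P" "f \<noteq> 0"
    using P \<open>lead_coeff P * lead_coeff P = 1\<close> by (auto simp: f_def)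
  have "f dvd G" if "ipoly G z = 0" for G
    using min_degree_root_pseudo_dvd[OF f(4,2) _ that] P_min f by simp
  then show ?thesis using f by (intro that) (auto simp: is_min_int_poly_def)
qed

lemma is_min_int_poly_transfer:
  fixes z w :: "'a::{idom, ring_char_0}"
  assumes f: "is_min_int_poly z f" and fw: "ipoly f w = 0" and "w ^ n = 1" "n > 0"
  shows "is_min_int_poly w f"
proof -
  obtain g where g: "is_min_int_poly w g" using exists_min_int_poly[OF assms(3,4)] .
  then have "g dvd f" using fw by (simp add: is_min_int_poly_def)
  then obtain h where h: "f = g * h" by (elim dvdE)
  have "ipoly g z * ipoly h z = 0" using f h by (simp add: is_min_int_poly_def)
  moreover have "ipoly h z \<noteq> 0"
  proof
    assume "ipoly h z = 0"
    then obtain v where "h = f * v" using f by (auto simp: is_min_int_poly_def elim!: dvdE)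
    with h have "f * (g * v) = f * 1" by (simp add: algebra_simps)
    moreover have "f \<noteq> 0" using f by (auto simp: is_min_int_poly_def)
    ultimately have "ipoly g w * ipoly v w = 1" by (metis ipoly_1 ipoly_mult mult_left_cancel)
    then show False using g by (simp add: is_min_int_poly_def)
  qed
  ultimately have "f dvd g" using f by (simp add: is_min_int_poly_def)
  then show ?thesis using f fw g by (auto simp: is_min_int_poly_def intro: dvd_trans)
qed

text \<open>Read modulo \<open>r\<close>: in \<open>(\<int>/r\<int>)[X]\<close> no non-zero constant is a multiple of a monic
  non-constant polynomial.\<close>

lemma dvd_const_if_monic_multiple_mod:
  fixes f C D :: "int poly"
  assumes f: "lead_coeff f = 1" "degree f \<ge> 1"
    and eq: "[:c:] = f * C + smult r D"
  shows "r dvd c"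
proof -
  define d where "d = degree f"
  have coeff_C: "r dvd coeff C j" for j
  proof (rule ccontr)
    assume "\<not> r dvd coeff C j"
    define J where "J = {i. \<not> r dvd coeff C i}"
    have "J \<subseteq> {..degree C}" by (auto simp: J_def intro!: le_degree)
    then have "finite J" by (rule finite_subset) simp
    moreover have "j \<in> J" using \<open>\<not> r dvd coeff C j\<close> by (simp add: J_def)
    ultimately have "Max J \<in> J" by (intro Max_in) auto
    have above_Max: "r dvd coeff C i" if "i > Max J" for i
    proof (rule ccontr)
      assume "\<not> r dvd coeff C i"
      then have "i \<le> Max J" using \<open>finite J\<close> by (simp add: J_def)
      then show False using that by simp
    qed
    define m where "m = Max J"
    let ?S = "\<Sum>i\<in>{..d + m} - {d}. coeff f i * coeff C (d + m - i)"
    have "coeff [:c:] (d + m) = 0" using f(2) by (simp add: d_def coeff_eq_0)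
    then have "coeff (f * C) (d + m) = - r * coeff D (d + m)"
      using arg_cong[OF eq, of "\<lambda>H. coeff H (d + m)"] by simp
    moreover have "coeff (f * C) (d + m) = coeff C m + ?S"
      using f(1) by (simp add: coeff_mult sum.remove[of _ d] d_def)
    ultimately have "coeff C m = - r * coeff D (d + m) - ?S" by linarith
    moreover have "r dvd ?S"
    proof (intro dvd_sum)
      fix i assume "i \<in> {..d + m} - {d}"
      then consider "i < d" | "i > d" by fastforce
      then show "r dvd coeff f i * coeff C (d + m - i)"
        by cases (simp_all add: above_Max m_def d_def coeff_eq_0)
    qed
    ultimately have "r dvd coeff C m" by (simp add: dvd_diff)
    then show False using \<open>Max J \<in> J\<close> by (simp add: m_def J_def)
  qed
  have "c = coeff f 0 * coeff C 0 + r * coeff D 0"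
    using arg_cong[OF eq, of "\<lambda>H. coeff H 0"] by (simp add: coeff_mult)
  then show ?thesis using coeff_C[of 0] by simp
qed

text \<open>Dedekind's argument: if \<open>f(w\<^sup>r) \<noteq> 0\<close>, then \<open>f\<close> divides \<open>g(X\<^sup>r) \<equiv> g\<^sup>r (mod r)\<close> for the
  cofactor \<open>g\<close> of \<open>f\<close> in \<open>X\<^sup>n - 1\<close>, and the Bezout identity \<open>f A + g B = n\<close> forces \<open>r dvd n\<close>.\<close>

lemma min_int_poly_root_power_prime:
  fixes w :: "'a::{idom, ring_char_0}"
  assumes f: "is_min_int_poly w f" and wn: "w ^ n = 1" "n > 0"
    and r: "prime r" "\<not> r dvd n"
  shows "ipoly f (w ^ r) = 0"
proof (rule ccontr)
  assume fr: "ipoly f (w ^ r) \<noteq> 0"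
  define Xn where "Xn = (monom 1 n - 1 :: int poly)"
  have Xn_roots: "ipoly Xn (w ^ k) = 0" for k
    using wn by (simp add: Xn_def) (metis mult.commute power_mult power_one)
  obtain g where g: "Xn = f * g" using f Xn_roots[of 1] by (auto simp: is_min_int_poly_def)
  have "ipoly g (w ^ r) = 0" using fr Xn_roots[of r] by (simp add: g)
  then have "f dvd pcompose g (monom 1 r)"
    using f by (simp add: is_min_int_poly_def ipoly_pcompose)
  then obtain k where k: "pcompose g (monom 1 r) = f * k" by (elim dvdE)
  obtain E where E: "g ^ r = pcompose g (monom 1 r) + smult (int r) E"
    using int_poly_power_prime[OF r(1)] .
  define A where "A = monom 1 1 * pderiv g - smult (int n) g"
  define B where "B = monom 1 1 * pderiv f"
  have "f * A + g * B = monom 1 1 * pderiv Xn - smult (int n) Xn"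
    by (simp add: A_def B_def g pderiv_mult algebra_simps)
  also have "\<dots> = [:int n:]"
    using wn(2) by (cases n) (simp_all add: Xn_def pderiv_diff pderiv_monom mult_monom smult_diff_right smult_monom)
  finally have bezout: "f * A + g * B = [:int n:]" .
  define S where "S = (\<Sum>i<r. (g * B) ^ (r - Suc i) * (f * A + g * B) ^ i)"
  have "(f * A + g * B) ^ r - (g * B) ^ r = f * A * S"
    unfolding S_def by (subst power_diff_sumr2) simp
  then have "[:int n:] ^ r = f * (A * S) + B ^ r * g ^ r"
    unfolding bezout[symmetric] by (simp add: algebra_simps power_mult_distrib)
  also have "\<dots> = f * (A * S + B ^ r * k) + smult (int r) (B ^ r * E)"
    by (simp add: E k algebra_simps)
  finally have "[:int n ^ r:] = f * (A * S + B ^ r * k) + smult (int r) (B ^ r * E)"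
    by (simp add: poly_const_pow)
  moreover have "degree f \<ge> 1"
  proof (rule ccontr)
    assume "\<not> degree f \<ge> 1"
    then have "degree f = 0" by simp
    then have "f = [:1:]" using f degree_0_id[of f] by (simp add: is_min_int_poly_def)
    then show False using f by (simp add: is_min_int_poly_def)
  qed
  ultimately have "int r dvd int n ^ r"
    using f by (intro dvd_const_if_monic_multiple_mod) (auto simp: is_min_int_poly_def)
  then have "r dvd n" using r(1) by (metis of_nat_dvd_iff of_nat_power prime_dvd_power)
  then show False using r(2) by contradiction
qed

lemma min_int_poly_root_power_coprime:
  fixes z :: "'a::{idom, ring_char_0}"
  assumes f: "is_min_int_poly z f" and zn: "z ^ n = 1" "n > 0"
  shows "k > 0 \<Longrightarrow> coprime k n \<Longrightarrow> ipoly f (z ^ k) = 0"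
proof (induction k rule: less_induct)
  case (less k)
  show ?case
  proof (cases "k = 1")
    case True
    then show ?thesis using f by (simp add: is_min_int_poly_def)
  next
    case False
    then obtain r k' where r: "prime r" and k': "k = r * k'"
      using prime_factor_nat[of k] by (auto elim!: dvdE)
    then have "k' > 0" "k' < k" "coprime k' n" "\<not> r dvd n"
      using less.prems prime_gt_1_nat[OF r] by (auto simp: coprime_commute prime_imp_coprime_nat
          dest: coprime_common_divisor_nat)
    then have "ipoly f (z ^ k') = 0" using less.IH by blast
    moreover have "(z ^ k') ^ n = 1" using zn by (metis mult.commute power_mult power_one)
    ultimately have "is_min_int_poly (z ^ k') f"
      using is_min_int_poly_transfer[OF f _ _ zn(2)] by blast
    then have "ipoly f ((z ^ k') ^ r) = 0"
      using min_int_poly_root_power_prime \<open>(z ^ k') ^ n = 1\<close> zn(2) r \<open>\<not> r dvd n\<close> by blast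
    then show ?thesis by (simp add: k' power_mult mult.commute)
  qed
qed

lemma ipoly_root_of_unity_power_coprime:
  fixes z :: "'a::{idom, ring_char_0}"
  assumes "z ^ n = 1" "n > 0" and "ipoly G z = 0" and "k > 0" "coprime k n"
  shows "ipoly G (z ^ k) = 0"
proof -
  obtain f where f: "is_min_int_poly z f" using exists_min_int_poly[OF assms(1,2)] .
  then obtain h where "G = f * h" using assms(3) by (auto simp: is_min_int_poly_def)
  then show ?thesis using min_int_poly_root_power_coprime[OF f assms(1,2,4,5)] by simp
qed

section \<open>Exponential sums\<close>

definition e2pi :: "real \<Rightarrow> complex" where
  "e2pi t = exp (2 * pi * \<i> * complex_of_real t)"

lemma e2pi_0 [simp]: "e2pi 0 = 1"
  by (simp add: e2pi_def)

lemma e2pi_add: "e2pi (a + b) = e2pi a * e2pi b"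
  by (simp add: e2pi_def distrib_left exp_add)

lemma e2pi_cnj: "cnj (e2pi a) = e2pi (- a)"
  by (simp add: e2pi_def exp_cnj)

lemma e2pi_power: "e2pi a ^ k = e2pi (real k * a)"
  by (simp add: e2pi_def algebra_simps flip: exp_of_nat_mult)

lemma e2pi_of_int [simp]: "e2pi (of_int m) = 1"
proof -
  have "e2pi (of_int m) = exp (complex_of_real (2 * of_int m * pi) * \<i>)"
    by (simp add: e2pi_def algebra_simps)
  also have "\<dots> = 1" by (rule exp_integer_2pi) simp
  finally show ?thesis .
qed

lemma e2pi_1 [simp]: "e2pi 1 = 1"
  using e2pi_of_int[of 1] by simp

lemma e2pi_eq_1_iff: "e2pi a = 1 \<longleftrightarrow> a \<in> \<int>"
proof
  assume "e2pi a = 1"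
  then obtain n :: int where "2 * pi * a = of_int (2 * n) * pi"
    by (auto simp: e2pi_def exp_eq_1)
  then show "a \<in> \<int>" by (simp add: mult.commute)
qed (auto elim: Ints_cases)

lemma e2pi_eqI: "a - b \<in> \<int> \<Longrightarrow> e2pi a = e2pi b"
  by (metis Ints_cases add_diff_cancel_left' diff_add_cancel e2pi_add e2pi_of_int mult_1_right)

lemma sum_e2pi_multiples:
  assumes M: "M > 0"
  shows "(\<Sum>k<M. e2pi (real k * of_int t / real M)) = (if int M dvd t then of_nat M else 0)"
proof -
  define z where "z = e2pi (of_int t / real M)"
  have "z ^ M = 1" using M by (simp add: z_def e2pi_power)
  moreover have "z = 1 \<longleftrightarrow> int M dvd t"
  proof -
    have "z = 1 \<longleftrightarrow> of_int t / real M \<in> \<int>" by (simp add: z_def e2pi_eq_1_iff)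
    also have "\<dots> \<longleftrightarrow> int M dvd t"
    proof
      assume "of_int t / real M \<in> \<int>"
      then obtain m where "of_int t / real M = of_int m" by (elim Ints_cases)
      then have "of_int t = real M * of_int m" using M by (simp add: field_simps)
      then have "t = int M * m" by (metis of_int_eq_iff of_int_mult of_int_of_nat_eq)
      then show "int M dvd t" ..
    qed (use M in \<open>auto elim!: dvdE\<close>)
    finally show ?thesis .
  qed
  moreover have "(\<Sum>k<M. e2pi (real k * of_int t / real M)) = (\<Sum>k<M. z ^ k)"
    by (simp add: z_def e2pi_power)
  ultimately show ?thesis by (simp add: sum_gp_strict)
qed

text \<open>\<open>exp_sum M N X s t\<close> is the Fourier transform of the image of \<open>X\<close> in \<open>\<int>\<^sub>M \<times> \<int>\<^sub>N\<close>
  under \<open>x \<mapsto> (s x, t x)\<close>, counted with multiplicity.\<close>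

definition exp_sum :: "nat \<Rightarrow> nat \<Rightarrow> 'a set \<Rightarrow> ('a \<Rightarrow> int) \<Rightarrow> ('a \<Rightarrow> int) \<Rightarrow> nat \<Rightarrow> nat \<Rightarrow> complex"
  where "exp_sum M N X s t k l = (\<Sum>x\<in>X. e2pi (real k * of_int (s x) / real M + real l * of_int (t x) / real N))"

lemma exp_sum_inversion:
  assumes X: "finite X" and M: "M > 0" and N: "N > 0"
  shows "(\<Sum>k<M. \<Sum>l<N. e2pi (- (real k * of_int c / real M + real l * of_int d / real N))
            * exp_sum M N X s t k l)
       = of_nat M * of_nat N * of_nat (card {x\<in>X. int M dvd s x - c \<and> int N dvd t x - d})"
proof -
  define A where "A x k = e2pi (real k * of_int (s x - c) / real M)" for x k
  define B where "B x l = e2pi (real l * of_int (t x - d) / real N)" for x l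
  have "e2pi (- (real k * of_int c / real M + real l * of_int d / real N))
      * e2pi (real k * of_int (s x) / real M + real l * of_int (t x) / real N) = A x k * B x l" for k l x
    unfolding A_def B_def by (simp flip: e2pi_add add: algebra_simps diff_divide_distrib)
  then have "(\<Sum>k<M. \<Sum>l<N. e2pi (- (real k * of_int c / real M + real l * of_int d / real N))
        * exp_sum M N X s t k l) = (\<Sum>k<M. \<Sum>l<N. \<Sum>x\<in>X. A x k * B x l)"
    by (simp add: exp_sum_def sum_distrib_left)
  also have "\<dots> = (\<Sum>k<M. \<Sum>x\<in>X. \<Sum>l<N. A x k * B x l)"
    by (intro sum.cong refl sum.swap)
  also have "\<dots> = (\<Sum>x\<in>X. (\<Sum>k<M. A x k) * (\<Sum>l<N. B x l))"
    by (subst sum.swap) (simp add: sum_product)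
  also have "\<dots> = (\<Sum>x\<in>X. if int M dvd s x - c \<and> int N dvd t x - d then of_nat M * of_nat N else 0)"
    unfolding A_def B_def sum_e2pi_multiples[OF M] sum_e2pi_multiples[OF N] by (intro sum.cong) auto
  finally show ?thesis using X by (simp add: sum.If_cases Int_def)
qed

lemma residue_classes_disjoint:
  assumes "i < M" "j < M" "i \<noteq> j"
  shows "{x\<in>X. int M dvd s x - int i} \<inter> {x\<in>X. int M dvd s x - int j} = {}"
proof -
  have "int M dvd int i - int j" if "int M dvd s x - int j" "int M dvd s x - int i" for x
  proof -
    have "int i - int j = (s x - int j) - (s x - int i)" by simp
    then show ?thesis using that by (metis dvd_diff)
  qed
  moreover have "\<not> int M dvd int i - int j"
    using assms by (auto simp: mod_eq_dvd_iff[symmetric])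
  ultimately show ?thesis by blast
qed

lemma residue_classes_cover:
  assumes "M > 0"
  shows "X = (\<Union>c<M. {x\<in>X. int M dvd s x - int c})"
proof (intro set_eqI iffI)
  fix x assume "x \<in> X"
  moreover have "nat (s x mod int M) < M" "int M dvd s x - int (nat (s x mod int M))"
    using assms by (simp_all add: nat_less_iff mod_eq_dvd_iff[symmetric])
  ultimately show "x \<in> (\<Union>c<M. {x\<in>X. int M dvd s x - int c})" by blast
qed auto

lemma sum_card_residue_classes:
  assumes "finite X" "M > 0"
  shows "(\<Sum>c<M. card {x\<in>X. int M dvd s x - int c}) = card X"
proof -
  have "card (\<Union>c<M. {x\<in>X. int M dvd s x - int c}) = (\<Sum>c<M. card {x\<in>X. int M dvd s x - int c})"
    by (intro card_UN_disjoint ballI impI residue_classes_disjoint) (simp_all add: assms(1))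
  then show ?thesis by (simp flip: residue_classes_cover[OF assms(2)])
qed

lemma sum_e2pi_equidistributed:
  assumes X: "finite X" and M: "M > 1"
    and classes: "\<And>c. c < M \<Longrightarrow> card {x\<in>X. int M dvd s x - int c} = K"
  shows "(\<Sum>x\<in>X. e2pi (of_int (s x) / real M)) = 0"
proof -
  have "(\<Sum>x\<in>X. e2pi (of_int (s x) / real M))
      = (\<Sum>c<M. \<Sum>x\<in>{x\<in>X. int M dvd s x - int c}. e2pi (of_int (s x) / real M))"
  proof -
    have "(\<Sum>x\<in>(\<Union>c<M. {x\<in>X. int M dvd s x - int c}). e2pi (of_int (s x) / real M))
        = (\<Sum>c<M. \<Sum>x\<in>{x\<in>X. int M dvd s x - int c}. e2pi (of_int (s x) / real M))"
      by (intro sum.UNION_disjoint ballI impI residue_classes_disjoint) (simp_all add: X)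
    then show ?thesis using M by (simp flip: residue_classes_cover)
  qed
  also have "\<dots> = (\<Sum>c<M. of_nat K * e2pi (real c / real M))"
  proof (intro sum.cong refl)
    fix c assume "c \<in> {..<M}"
    have "e2pi (of_int (s x) / real M) = e2pi (real c / real M)"
      if x_in_class: "int M dvd s x - int c" for x
    proof -
      obtain m where "s x - int c = int M * m" using x_in_class by (elim dvdE)
      then have "of_int (s x) = real c + real M * of_int m"
        by (metis add_diff_cancel_left' diff_add_cancel of_int_add of_int_mult of_int_of_nat_eq)
      then have "of_int (s x) / real M - real c / real M = of_int m"
        using M by (simp add: field_simps)
      then show ?thesis by (intro e2pi_eqI) simp
    qed
    then show "(\<Sum>x\<in>{x\<in>X. int M dvd s x - int c}. e2pi (of_int (s x) / real M))
        = of_nat K * e2pi (real c / real M)"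
      using classes \<open>c \<in> {..<M}\<close> by simp
  qed
  also have "\<dots> = of_nat K * (\<Sum>c<M. e2pi (real c / real M))"
    by (rule sum_distrib_left[symmetric])
  also have "\<dots> = 0"
    using sum_e2pi_multiples[of M 1] M by simp
  finally show ?thesis .
qed

lemma e2pi_mod:
  assumes "M > 0"
  shows "e2pi (of_int a / real M) = e2pi (of_int (a mod int M) / real M)"
proof -
  have "a = a mod int M + int M * (a div int M)" by simp
  then have "of_int a = of_int (a mod int M) + real M * of_int (a div int M)"
    by (metis of_int_add of_int_mult of_int_of_nat_eq)
  then have "of_int a / real M - of_int (a mod int M) / real M = of_int (a div int M)"
    using assms by (simp add: field_simps)
  then show ?thesis by (intro e2pi_eqI) simp
qed

lemma exp_sum_cong:
  assumes "M > 0" "N > 0" "[k = k'] (mod M)" "[l = l'] (mod N)"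
  shows "exp_sum M N X s t k l = exp_sum M N X s t k' l'"
proof -
  obtain a b where "int k' - int k = int M * a" "int l' - int l = int N * b"
    using assms(3,4) by (metis cong_int_iff cong_iff_dvd_diff cong_sym dvdE)
  then have "real k' = real k + real M * of_int a" "real l' = real l + real N * of_int b"
    by (metis add_diff_cancel_left' diff_add_cancel of_int_add of_int_mult of_int_of_nat_eq)+
  then show ?thesis
    unfolding exp_sum_def
  proof (intro sum.cong refl e2pi_eqI)
    fix x
    have "real k * of_int (s x) / real M + real l * of_int (t x) / real N
        - (real k' * of_int (s x) / real M + real l' * of_int (t x) / real N)
        = of_int (- (a * s x + b * t x))"
      using assms(1,2) \<open>real k' = _\<close> \<open>real l' = _\<close> by (simp add: field_simps)
    then show "real k * of_int (s x) / real M + real l * of_int (t x) / real N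
        - (real k' * of_int (s x) / real M + real l' * of_int (t x) / real N) \<in> \<int>" by simp
  qed
qed

text \<open>All the sums \<open>exp_sum P Q X s t k l\<close> with \<open>k\<close>, \<open>l\<close> prime to \<open>P\<close>, \<open>Q\<close> are Galois conjugates
  of one value of an integer polynomial at a primitive \<open>PQ\<close>-th root of unity.\<close>

lemma exp_sum_coprime_multiple:
  assumes P: "prime P" and Q: "prime Q" and "P \<noteq> Q" and X: "finite X"
    and zero: "exp_sum P Q X s t 1 1 = 0" and k: "\<not> P dvd k" and l: "\<not> Q dvd l"
  shows "exp_sum P Q X s t k l = 0"
proof -
  have P0: "P > 0" and Q0: "Q > 0" using P Q by (auto simp: prime_gt_0_nat)
  have "coprime P Q" using assms(1-3) by (simp add: primes_coprime)
  then obtain K where K: "[K = k] (mod P)" "[K = l] (mod Q)"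
    using binary_chinese_remainder_nat by blast
  then have "\<not> P dvd K" "\<not> Q dvd K" using k l cong_dvd_iff by blast+
  then have K0: "K > 0" and "coprime K (P * Q)"
    using prime_imp_coprime[OF P] prime_imp_coprime[OF Q] by (auto intro: gr0I simp: coprime_commute)
  define n where "n = P * Q"
  have n0: "n > 0" using P0 Q0 by (simp add: n_def)
  define z where "z = e2pi (1 / real n)"
  have z_power: "z ^ m = e2pi (of_int (int m) / real n)" for m
    by (simp add: z_def e2pi_power)
  define e where "e x = nat ((int Q * s x + int P * t x) mod int n)" for x
  define G where "G = (\<Sum>x\<in>X. monom 1 (e x) :: int poly)"
  have exp_sum_diagonal: "exp_sum P Q X s t j j = ipoly G (z ^ j)" for j
  proof -
    have "e2pi (real j * of_int (s x) / real P + real j * of_int (t x) / real Q) = (z ^ j) ^ e x" for x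
    proof -
      have "e2pi (real j * of_int (s x) / real P + real j * of_int (t x) / real Q)
          = e2pi (of_int (int Q * s x + int P * t x) / real n) ^ j"
        unfolding e2pi_power by (rule arg_cong[where f = e2pi]) (use P0 Q0 in \<open>simp add: n_def field_simps\<close>)
      also have "\<dots> = (z ^ e x) ^ j"
        using e2pi_mod[OF n0, of "int Q * s x + int P * t x"] n0 by (simp add: z_power e_def)
      finally show ?thesis by (simp only: power_mult[symmetric] mult.commute)
    qed
    then show ?thesis by (simp add: exp_sum_def G_def ipoly_sum)
  qed
  have "z ^ n = 1" using n0 by (simp add: z_power)
  moreover have "ipoly G z = 0" using zero exp_sum_diagonal[of 1] by simp
  ultimately have "ipoly G (z ^ K) = 0"
    using ipoly_root_of_unity_power_coprime[of z n G K] K0 \<open>coprime K (P * Q)\<close> n0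
    by (simp add: n_def)
  then have "exp_sum P Q X s t K K = 0" by (simp add: exp_sum_diagonal)
  moreover have "exp_sum P Q X s t k l = exp_sum P Q X s t K K"
    using K P0 Q0 by (intro exp_sum_cong) (simp_all add: cong_sym)
  ultimately show ?thesis by simp
qed

lemma sum_sum_vanishing_off_axes:
  fixes h :: "nat \<Rightarrow> nat \<Rightarrow> 'b::ab_group_add"
  assumes "M > 0" "N > 0"
    and zero: "\<And>k l. 0 < k \<Longrightarrow> k < M \<Longrightarrow> 0 < l \<Longrightarrow> l < N \<Longrightarrow> h k l = 0"
  shows "(\<Sum>k<M. \<Sum>l<N. h k l) = (\<Sum>l<N. h 0 l) + (\<Sum>k<M. h k 0) - h 0 0"
proof -
  have row: "(\<Sum>l<N. h k l) = h k 0" if "0 < k" "k < M" for k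
  proof -
    have "(\<Sum>l<N. h k l) = h k 0 + (\<Sum>l\<in>{..<N} - {0}. h k l)"
      using assms(2) by (subst sum.remove[of _ 0]) auto
    also have "(\<Sum>l\<in>{..<N} - {0}. h k l) = 0"
      using zero that by (intro sum.neutral) auto
    finally show ?thesis by simp
  qed
  have "(\<Sum>k<M. \<Sum>l<N. h k l) = (\<Sum>l<N. h 0 l) + (\<Sum>k\<in>{..<M} - {0}. \<Sum>l<N. h k l)"
    using assms(1) by (subst sum.remove[of _ 0]) auto
  also have "(\<Sum>k\<in>{..<M} - {0}. \<Sum>l<N. h k l) = (\<Sum>k\<in>{..<M} - {0}. h k 0)"
    using row by (intro sum.cong) auto
  also have "\<dots> = (\<Sum>k<M. h k 0) - h 0 0"
    using assms(1) by (subst sum.remove[of _ 0, where A = "{..<M}"]) auto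
  finally show ?thesis by (simp add: algebra_simps)
qed

lemma sum_sum_vanishing_off_origin:
  fixes h :: "nat \<Rightarrow> nat \<Rightarrow> 'b::comm_monoid_add"
  assumes "M > 0" "N > 0"
    and zero: "\<And>k l. k < M \<Longrightarrow> l < N \<Longrightarrow> (k, l) \<noteq> (0, 0) \<Longrightarrow> h k l = 0"
  shows "(\<Sum>k<M. \<Sum>l<N. h k l) = h 0 0"
proof -
  have "(\<Sum>k<M. \<Sum>l<N. h k l) = (\<Sum>(k, l)\<in>{..<M} \<times> {..<N}. h k l)"
    by (simp add: sum.cartesian_product)
  also have "\<dots> = (\<Sum>(k, l)\<in>{(0, 0)}. h k l)"
  proof (rule sum.mono_neutral_right)
    show "{(0, 0)} \<subseteq> {..<M} \<times> {..<N}" using assms(1,2) by simp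
    show "\<forall>kl\<in>{..<M} \<times> {..<N} - {(0, 0)}. (case kl of (k, l) \<Rightarrow> h k l) = 0"
    proof
      fix kl assume kl: "kl \<in> {..<M} \<times> {..<N} - {(0, 0)}"
      obtain k l where kl_eq: "kl = (k, l)" by fastforce
      with kl have "h k l = 0" by (intro zero) auto
      then show "(case kl of (k, l) \<Rightarrow> h k l) = 0" by (simp add: kl_eq)
    qed
  qed simp
  finally show ?thesis by simp
qed

lemma sum_eq_const_if_ge:
  fixes f :: "nat \<Rightarrow> nat"
  assumes "\<And>c. c < M \<Longrightarrow> f c \<ge> a" and "(\<Sum>c<M. f c) = M * a" and "c < M"
  shows "f c = a"
proof (rule ccontr)
  assume "f c \<noteq> a"
  then have "a < f c" using assms(1)[OF assms(3)] by simp
  then have "(\<Sum>c<M. a) < (\<Sum>c<M. f c)"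
    by (intro sum_strict_mono_ex1) (use assms(1,3) in auto)
  then show False using assms(2) by simp
qed

lemma rows_or_columns_constant:
  fixes row col :: "nat \<Rightarrow> nat"
  assumes P: "prime P" and Q: "prime Q" and "P \<noteq> Q"
    and rows: "(\<Sum>c<P. row c) = P * Q" and cols: "(\<Sum>d<Q. col d) = P * Q"
    and cells: "\<And>c d. c < P \<Longrightarrow> d < Q \<Longrightarrow> \<exists>m. P * Q * m + P * Q = Q * col d + P * row c"
  shows "(\<forall>c<P. row c = Q) \<or> (\<forall>d<Q. col d = P)"
proof -
  have P0: "0 < P" and Q0: "0 < Q" using P Q by (auto simp: prime_gt_0_nat)
  have "coprime P Q" using assms(1-3) by (simp add: primes_coprime)
  show ?thesis
  proof (cases "\<exists>d<Q. col d = 0")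
    case True
    then obtain d where d: "d < Q" "col d = 0" by blast
    have row_ge: "row c \<ge> Q" if c: "c < P" for c
    proof -
      obtain m where "P * Q * m + P * Q = P * row c" using cells[OF c d(1)] d(2) by auto
      then have "P * (Q * m + Q) = P * row c" by (simp add: algebra_simps)
      then have "row c = Q * m + Q" using P0 by simp
      then show ?thesis by simp
    qed
    have "row c = Q" if "c < P" for c
      using row_ge rows that by (intro sum_eq_const_if_ge[of P Q row]) (auto simp: mult.commute)
    then show ?thesis by blast
  next
    case False
    have col_ge: "col d \<ge> P" if d: "d < Q" for d
    proof -
      obtain m where m: "P * Q * m + P * Q = Q * col d + P * row 0" using cells[OF P0 d] by blast
      have "P dvd Q * col d + P * row 0" by (metis m dvd_add dvd_mult dvd_triv_left mult.assoc)
      then have "P dvd Q * col d" by (simp add: dvd_add_left_iff)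
      then have "P dvd col d" using \<open>coprime P Q\<close> by (simp add: coprime_dvd_mult_right_iff)
      moreover have "col d \<noteq> 0" using False d by auto
      ultimately show ?thesis by (intro dvd_imp_le) auto
    qed
    have "col d = P" if "d < Q" for d
      using col_ge cols that by (intro sum_eq_const_if_ge[of Q P col]) auto
    then show ?thesis by blast
  qed
qed

text \<open>Once all mixed coefficients vanish, Fourier inversion gives
  \<open>PQ #{s \<equiv> c, t \<equiv> d} = Q #{t \<equiv> d} + P #{s \<equiv> c} - |X|\<close> for all residues \<open>c\<close>, \<open>d\<close>.\<close>

lemma equidistributed_if_exp_sums_vanish:
  assumes P: "prime P" and Q: "prime Q" and "P \<noteq> Q" and X: "finite X" and card_X: "card X = P * Q"
    and zero: "\<And>k l. 0 < k \<Longrightarrow> k < P \<Longrightarrow> 0 < l \<Longrightarrow> l < Q \<Longrightarrow> exp_sum P Q X s t k l = 0"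
  shows "(\<forall>c<P. card {x\<in>X. int P dvd s x - int c} = Q) \<or> (\<forall>d<Q. card {x\<in>X. int Q dvd t x - int d} = P)"
proof -
  have P0: "P > 0" and Q0: "Q > 0" using P Q by (auto simp: prime_gt_0_nat)
  define row where "row c = card {x\<in>X. int P dvd s x - int c}" for c
  define col where "col d = card {x\<in>X. int Q dvd t x - int d}" for d
  have cells: "\<exists>m. P * Q * m + P * Q = Q * col d + P * row c" if "c < P" "d < Q" for c d
  proof -
    define h where "h k l = e2pi (- (real k * of_int (int c) / real P + real l * of_int (int d) / real Q))
      * exp_sum P Q X s t k l" for k l
    define m where "m = card {x\<in>X. int P dvd s x - int c \<and> int Q dvd t x - int d}"
    have "of_nat P * of_nat Q * of_nat m = (\<Sum>k<P. \<Sum>l<Q. h k l)"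
      unfolding h_def m_def by (rule exp_sum_inversion[OF X P0 Q0, symmetric])
    also have "\<dots> = (\<Sum>l<Q. h 0 l) + (\<Sum>k<P. h k 0) - h 0 0"
      using zero by (intro sum_sum_vanishing_off_axes[OF P0 Q0]) (simp add: h_def)
    also have "(\<Sum>l<Q. h 0 l) = (\<Sum>k<1. \<Sum>l<Q. e2pi (- (real k * of_int 0 / real 1
        + real l * of_int (int d) / real Q)) * exp_sum 1 Q X s t k l)"
      by (simp add: h_def exp_sum_def)
    also have "\<dots> = of_nat Q * of_nat (col d)"
      using exp_sum_inversion[OF X _ Q0, where M = 1 and c = 0 and d = "int d" and s = s and t = t]
      by (simp add: col_def)
    also have "(\<Sum>k<P. h k 0) = (\<Sum>k<P. \<Sum>l<1. e2pi (- (real k * of_int (int c) / real P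
        + real l * of_int 0 / real 1)) * exp_sum P 1 X s t k l)"
      by (simp add: h_def exp_sum_def)
    also have "\<dots> = of_nat P * of_nat (row c)"
      using exp_sum_inversion[OF X P0, where N = 1 and c = "int c" and d = 0 and s = s and t = t]
      by (simp add: row_def)
    also have "h 0 0 = of_nat (P * Q)" by (simp add: h_def exp_sum_def card_X)
    finally have "of_nat (P * Q * m + P * Q) = (of_nat (Q * col d + P * row c) :: complex)"
      by (simp add: algebra_simps)
    then show ?thesis by (simp only: of_nat_eq_iff) blast
  qed
  have "(\<forall>c<P. row c = Q) \<or> (\<forall>d<Q. col d = P)"
    using P Q \<open>P \<noteq> Q\<close> cells X card_X P0 Q0
    by (intro rows_or_columns_constant) (simp_all add: row_def col_def sum_card_residue_classes)
  then show ?thesis by (simp add: row_def col_def)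
qed

text \<open>Otherwise \<open>X\<close> would be equidistributed over \<open>\<int>\<^sub>R\<^sup>2\<close>, forcing \<open>R\<^sup>2\<close> to divide \<open>|X|\<close>.\<close>

lemma exp_sum_nonvanishing:
  assumes R: "prime R" and X: "finite X" and card_X: "card X = R * S" and "\<not> R dvd S"
  obtains u1 u2 where "u1 < R" "u2 < R" "(u1, u2) \<noteq> (0, 0)" "exp_sum R R X s t u1 u2 \<noteq> 0"
proof (rule ccontr)
  assume "\<not> thesis"
  with that have zero: "exp_sum R R X s t u1 u2 = 0"
    if "u1 < R" "u2 < R" "(u1, u2) \<noteq> (0, 0)" for u1 u2
    using that by blast
  have R0: "R > 0" using R by (simp add: prime_gt_0_nat)
  define h where "h k l = e2pi (- (real k * of_int 0 / real R + real l * of_int 0 / real R))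
    * exp_sum R R X s t k l" for k l
  have "of_nat R * of_nat R * of_nat (card {x\<in>X. int R dvd s x - 0 \<and> int R dvd t x - 0})
      = (\<Sum>k<R. \<Sum>l<R. h k l)"
    unfolding h_def by (rule exp_sum_inversion[OF X R0 R0, symmetric])
  also have "\<dots> = h 0 0" using zero by (intro sum_sum_vanishing_off_origin[OF R0 R0]) (simp add: h_def)
  also have "\<dots> = of_nat (R * S)" by (simp add: h_def exp_sum_def card_X)
  finally have "(of_nat (R * (R * card {x\<in>X. int R dvd s x - 0 \<and> int R dvd t x - 0})) :: complex)
      = of_nat (R * S)"
    by (simp add: mult.assoc)
  then have "R * (R * card {x\<in>X. int R dvd s x - 0 \<and> int R dvd t x - 0}) = R * S"
    by (simp only: of_nat_eq_iff)
  then have "R * card {x\<in>X. int R dvd s x - 0 \<and> int R dvd t x - 0} = S" using R0 by simp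
  then have "R dvd S" by (metis dvd_triv_left)
  then show False using \<open>\<not> R dvd S\<close> by contradiction
qed

section \<open>Characters of \<open>\<int>\<^sub>p\<^sup>2 \<times> \<int>\<^sub>q\<^sup>2\<close>\<close>

definition dot :: "int \<times> int \<Rightarrow> int \<times> int \<Rightarrow> int" where
  "dot a b = fst a * fst b + snd a * snd b"

definition smult_elt :: "int \<Rightarrow> int \<Rightarrow> elt \<Rightarrow> elt" where
  "smult_elt k l w = ((k * fst (fst w), k * snd (fst w)), (l * fst (snd w), l * snd (snd w)))"

lemma chr_eq_e2pi:
  "chr p q w x = e2pi (of_int (dot (fst w) (fst x)) / of_int p + of_int (dot (snd w) (snd x)) / of_int q)"
  by (cases w; cases x) (auto simp: chr_def e2pi_def dot_def)

lemma chr_set_smult_elt: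
  "chr_set (int P) (int Q) (smult_elt (int k) (int l) w) X
     = exp_sum P Q X (\<lambda>x. dot (fst w) (fst x)) (\<lambda>x. dot (snd w) (snd x)) k l"
  by (simp add: chr_set_def exp_sum_def chr_eq_e2pi smult_elt_def dot_def algebra_simps)

lemma dot_gsub:
  "dot (fst (gsub p q a b)) y = dot (fst a) y - dot (fst b) y
     - p * ((fst (fst a) - fst (fst b)) div p * fst y + (snd (fst a) - snd (fst b)) div p * snd y)"
  "dot (snd (gsub p q a b)) y = dot (snd a) y - dot (snd b) y
     - q * ((fst (snd a) - fst (snd b)) div q * fst y + (snd (snd a) - snd (snd b)) div q * snd y)"
  by (simp_all add: gsub_def dot_def flip: minus_mult_div_eq_mod) (simp_all add: algebra_simps)

lemma chr_gsub:
  assumes "p \<noteq> 0" "q \<noteq> 0"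
  shows "chr p q (gsub p q a b) x = chr p q a x * cnj (chr p q b x)"
  unfolding chr_eq_e2pi e2pi_cnj e2pi_add[symmetric] dot_gsub
  by (rule e2pi_eqI) (use assms in \<open>simp add: diff_divide_distrib\<close>)

lemma chr_norm: "chr p q w x * cnj (chr p q w x) = 1"
  by (simp add: chr_eq_e2pi e2pi_cnj flip: e2pi_add)

lemma chr_commute: "chr p q w x = chr p q x w"
  by (simp add: chr_eq_e2pi dot_def mult.commute)

lemma chr_zero [simp]: "chr p q ((0, 0), (0, 0)) x = 1"
  by (simp add: chr_eq_e2pi dot_def)

lemma chr_set_zero: "chr_set p q ((0, 0), (0, 0)) X = of_nat (card X)"
  by (simp add: chr_set_def)

lemma chr_set_eq_if_gsub_zero:
  assumes "p \<noteq> 0" "q \<noteq> 0" "gsub p q w w' = ((0, 0), (0, 0))"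
  shows "chr_set p q w X = chr_set p q w' X"
  unfolding chr_set_def
proof (rule sum.cong[OF refl])
  fix x
  have "chr p q w x * cnj (chr p q w' x) = 1"
    using chr_gsub[OF assms(1,2), of w w' x] assms(3) by simp
  then show "chr p q w x = chr p q w' x"
    using chr_norm[of p q w' x] by (metis mult.commute mult.left_neutral mult.assoc)
qed

lemma chr_swap: "chr q p (prod.swap w) (prod.swap x) = chr p q w x"
  by (simp add: chr_eq_e2pi add.commute)

lemma chr_set_swap: "chr_set q p (prod.swap w) (prod.swap ` X) = chr_set p q w X"
  by (simp add: chr_set_def sum.reindex chr_swap)

lemma prime_int_nat:
  fixes p :: int
  assumes "prime p"
  obtains P where "p = int P" "prime P"
proof
  show "p = int (nat p)" using prime_gt_0_int[OF assms] by simp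
  then show "prime (nat p)" using assms by (simp add: prime_nat_int_transfer)
qed

lemma gsub_smult_elt_mod:
  "gsub p q (smult_elt k l w) (smult_elt (k mod p) (l mod q) w) = ((0, 0), (0, 0))"
proof -
  have "k * a - k mod p * a = p * (k div p * a)" for k a p :: int
  proof -
    have "k * a - k mod p * a = (k - k mod p) * a" by (simp add: left_diff_distrib)
    then show ?thesis by (simp add: minus_mod_eq_mult_div)
  qed
  then show ?thesis by (simp add: gsub_def smult_elt_def)
qed

lemma chr_set_smult_elt_eq_0:
  assumes p: "prime p" and q: "prime q" and "p \<noteq> q" and X: "finite X"
    and zero: "chr_set p q w X = 0" and k: "\<not> p dvd k" and l: "\<not> q dvd l"
  shows "chr_set p q (smult_elt k l w) X = 0"
proof -
  obtain P Q where PQ: "p = int P" "prime P" "q = int Q" "prime Q"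
    using prime_int_nat[OF p] prime_int_nat[OF q] by metis
  define s where "s = (\<lambda>x :: elt. dot (fst w) (fst x))"
  define t where "t = (\<lambda>x :: elt. dot (snd w) (snd x))"
  define k' where "k' = nat (k mod p)"
  define l' where "l' = nat (l mod q)"
  have k': "int k' = k mod p" and l': "int l' = l mod q"
    using PQ by (simp_all add: k'_def l'_def prime_gt_0_nat)
  have "\<not> int P dvd int k'" using k k' PQ(1) by (simp add: dvd_mod_iff)
  moreover have "\<not> int Q dvd int l'" using l l' PQ(3) by (simp add: dvd_mod_iff)
  moreover have "exp_sum P Q X s t 1 1 = 0"
    using chr_set_smult_elt[of P Q 1 1 w X] zero by (simp add: PQ s_def t_def smult_elt_def)
  ultimately have "exp_sum P Q X s t k' l' = 0"
    using exp_sum_coprime_multiple[OF PQ(2,4) _ X] \<open>p \<noteq> q\<close> PQ by (simp only: int_dvd_int_iff) blast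
  moreover have "chr_set p q (smult_elt k l w) X = chr_set p q (smult_elt (k mod p) (l mod q) w) X"
    using PQ(2,4) by (intro chr_set_eq_if_gsub_zero gsub_smult_elt_mod) (auto simp: PQ(1,3))
  ultimately show ?thesis
    using chr_set_smult_elt[of P Q k' l' w X] by (simp add: k' l' PQ s_def t_def)
qed

lemma chr_set_eq_0_split:
  assumes p: "prime p" and q: "prime q" and "p \<noteq> q" and X: "finite X"
    and card_X: "card X = nat (p * q)" and zero: "chr_set p q w X = 0"
  shows "chr_set p q (fst w, (0, 0)) X = 0 \<or> chr_set p q ((0, 0), snd w) X = 0"
proof -
  obtain P Q where PQ: "p = int P" "prime P" "q = int Q" "prime Q"
    using prime_int_nat[OF p] prime_int_nat[OF q] by metis
  define s where "s = (\<lambda>x :: elt. dot (fst w) (fst x))"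
  define t where "t = (\<lambda>x :: elt. dot (snd w) (snd x))"
  have "exp_sum P Q X s t k l = 0" if "0 < k" "k < P" "0 < l" "l < Q" for k l
  proof -
    have "\<not> p dvd int k" "\<not> q dvd int l"
      using that nat_dvd_not_less[of k P] nat_dvd_not_less[of l Q] by (simp_all add: PQ)
    then have "chr_set p q (smult_elt (int k) (int l) w) X = 0"
      by (rule chr_set_smult_elt_eq_0[OF p q \<open>p \<noteq> q\<close> X zero])
    then show ?thesis using chr_set_smult_elt[of P Q k l w X] by (simp add: PQ s_def t_def)
  qed
  then have "(\<forall>c<P. card {x\<in>X. int P dvd s x - int c} = Q) \<or> (\<forall>d<Q. card {x\<in>X. int Q dvd t x - int d} = P)"
    using \<open>p \<noteq> q\<close> card_X by (intro equidistributed_if_exp_sums_vanish[OF PQ(2,4) _ X]) (auto simp: PQ nat_mult_distrib)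
  then show ?thesis
  proof (elim disjE)
    assume "\<forall>c<P. card {x\<in>X. int P dvd s x - int c} = Q"
    then have "(\<Sum>x\<in>X. e2pi (of_int (s x) / real P)) = 0"
      using prime_gt_1_nat[OF PQ(2)] by (intro sum_e2pi_equidistributed[OF X]) auto
    then show ?thesis by (simp add: chr_set_def chr_eq_e2pi s_def PQ dot_def)
  next
    assume "\<forall>d<Q. card {x\<in>X. int Q dvd t x - int d} = P"
    then have "(\<Sum>x\<in>X. e2pi (of_int (t x) / real Q)) = 0"
      using prime_gt_1_nat[OF PQ(4)] by (intro sum_e2pi_equidistributed[OF X]) auto
    then show ?thesis by (simp add: chr_set_def chr_eq_e2pi t_def PQ dot_def)
  qed
qed

lemma exists_chr_set_fst_nonzero:
  assumes p: "prime p" and q: "prime q" and "p \<noteq> q" and X: "finite X" and card_X: "card X = nat (p * q)"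
  obtains u where "\<not> (p dvd fst u \<and> p dvd snd u)" "chr_set p q (u, (0, 0)) X \<noteq> 0"
proof -
  obtain P Q where PQ: "p = int P" "prime P" "q = int Q" "prime Q"
    using prime_int_nat[OF p] prime_int_nat[OF q] by metis
  have "\<not> P dvd Q" using primes_dvd_imp_eq[OF PQ(2,4)] \<open>p \<noteq> q\<close> PQ(1,3) by auto
  moreover have "card X = P * Q" using card_X by (simp add: PQ nat_mult_distrib)
  ultimately obtain u1 u2 where u: "u1 < P" "u2 < P" "(u1, u2) \<noteq> (0, 0)"
    and nonzero: "exp_sum P P X (\<lambda>x. fst (fst x)) (\<lambda>x. snd (fst x)) u1 u2 \<noteq> 0"
    using exp_sum_nonvanishing[OF PQ(2) X] by metis
  show thesis
  proof
    show "\<not> (p dvd fst (int u1, int u2) \<and> p dvd snd (int u1, int u2))"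
    proof
      assume "p dvd fst (int u1, int u2) \<and> p dvd snd (int u1, int u2)"
      then have "u1 mod P = 0" "u2 mod P = 0" by (simp_all add: PQ flip: dvd_eq_mod_eq_0)
      then show False using u by simp
    qed
    show "chr_set p q ((int u1, int u2), (0, 0)) X \<noteq> 0"
      using nonzero by (simp add: chr_set_def exp_sum_def chr_eq_e2pi dot_def PQ add_divide_distrib)
  qed
qed

lemma exists_chr_set_snd_nonzero:
  assumes "prime p" "prime q" "p \<noteq> q" "finite X" "card X = nat (p * q)"
  obtains v where "\<not> (q dvd fst v \<and> q dvd snd v)" "chr_set p q ((0, 0), v) X \<noteq> 0"
proof -
  have swap_X: "finite (prod.swap ` X)" "card (prod.swap ` X) = nat (q * p)"
    using assms(4,5) by (simp_all add: card_image mult.commute[of q p])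
  obtain v where v: "\<not> (q dvd fst v \<and> q dvd snd v)" "chr_set q p (v, (0, 0)) (prod.swap ` X) \<noteq> 0"
    by (rule exists_chr_set_fst_nonzero[OF assms(2,1) not_sym[OF assms(3)] swap_X])
  moreover have "chr_set q p (v, (0, 0)) (prod.swap ` X) = chr_set p q ((0, 0), v) X"
    using chr_set_swap[where w = "((0, 0), v)" and X = X and p = p and q = q] by simp
  ultimately show thesis using that by simp
qed

definition det2 :: "int \<times> int \<Rightarrow> int \<times> int \<Rightarrow> int" where
  "det2 u v = fst u * snd v - snd u * fst v"

lemma inverse_mod_prime:
  fixes p a :: int
  assumes "prime p" "\<not> p dvd a"
  obtains i where "p dvd a * i - 1"
proof -
  have "coprime a p" using prime_imp_coprime[OF assms] by (simp add: coprime_commute)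
  then obtain i where "[a * i = 1] (mod p)" using cong_solve_coprime_int by blast
  then show thesis using that by (simp add: cong_iff_dvd_diff)
qed

lemma parallel_if_det2_dvd:
  fixes p :: int
  assumes p: "prime p" and u: "\<not> (p dvd fst u \<and> p dvd snd u)" and det: "p dvd det2 u e"
  obtains t where "p dvd fst e - t * fst u" "p dvd snd e - t * snd u"
proof (cases "p dvd fst u")
  case False
  then obtain i where i: "p dvd fst u * i - 1" using inverse_mod_prime[OF p] by blast
  have "fst e - fst e * i * fst u = - (fst e * (fst u * i - 1))"
    and "snd e - fst e * i * snd u = i * det2 u e - snd e * (fst u * i - 1)"
    by (simp_all add: det2_def algebra_simps)
  then show thesis using that[of "fst e * i"] i det by (simp add: dvd_diff)
next
  case True
  then have "\<not> p dvd snd u" using u by blast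
  then obtain i where i: "p dvd snd u * i - 1" using inverse_mod_prime[OF p] by blast
  have "fst e - snd e * i * fst u = - (i * det2 u e) - fst e * (snd u * i - 1)"
    and "snd e - snd e * i * snd u = - (snd e * (snd u * i - 1))"
    by (simp_all add: det2_def algebra_simps)
  then show thesis using that[of "snd e * i"] i det by (simp add: dvd_diff)
qed

text \<open>No hypothesis \<open>d \<noteq> 0\<close> is needed: \<open>d \<equiv> 0 (mod p)\<close> is ruled out by \<open>\<chi>\<^sub>0(X) = |X| \<noteq> 0\<close>.\<close>

lemma chr_set_fst_eq_0_if_parallel:
  assumes p: "prime p" and q: "prime q" and "p \<noteq> q" and X: "finite X" "X \<noteq> {}"
    and zero: "chr_set p q (d, (0, 0)) X = 0"
    and u: "\<not> (p dvd fst u \<and> p dvd snd u)" and det: "p dvd det2 u d"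
  shows "chr_set p q (u, (0, 0)) X = 0"
proof -
  have p0: "p \<noteq> 0" and q0: "q \<noteq> 0" using p q by auto
  obtain t where t: "p dvd fst d - t * fst u" "p dvd snd d - t * snd u"
    using parallel_if_det2_dvd[OF p u det] .
  have "\<not> p dvd t"
  proof
    assume "p dvd t"
    then have "p dvd (fst d - t * fst u) + t * fst u" "p dvd (snd d - t * snd u) + t * snd u"
      using t by (intro dvd_add; simp add: dvd_mult2)+
    then have "gsub p q (d, (0, 0)) ((0, 0), (0, 0)) = ((0, 0), (0, 0))"
      by (simp add: gsub_def mod_eq_0_iff_dvd)
    then have "chr_set p q (d, (0, 0)) X = of_nat (card X)"
      using chr_set_eq_if_gsub_zero[OF p0 q0] chr_set_zero by metis
    then show False using zero X by simp
  qed
  then obtain k where k: "p dvd t * k - 1" using inverse_mod_prime[OF p] by blast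
  have "fst u - k * fst d = - ((t * k - 1) * fst u) - k * (fst d - t * fst u)"
    and "snd u - k * snd d = - ((t * k - 1) * snd u) - k * (snd d - t * snd u)"
    by (simp_all add: algebra_simps)
  then have "gsub p q (u, (0, 0)) (smult_elt k 1 (d, (0, 0))) = ((0, 0), (0, 0))"
    using k t by (simp add: gsub_def smult_elt_def dvd_diff mod_eq_0_iff_dvd)
  then have "chr_set p q (u, (0, 0)) X = chr_set p q (smult_elt k 1 (d, (0, 0))) X"
    by (rule chr_set_eq_if_gsub_zero[OF p0 q0])
  also have "\<dots> = 0"
  proof (rule chr_set_smult_elt_eq_0[OF p q \<open>p \<noteq> q\<close> X(1) zero])
    show "\<not> p dvd k"
    proof
      assume "p dvd k"
      then have "p dvd t * k" by (simp add: dvd_mult)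
      then have "p dvd t * k - (t * k - 1)" using k by (rule dvd_diff)
      then have "p dvd 1" by simp
      then show False using p not_prime_unit by blast
    qed
    show "\<not> q dvd 1" using q not_prime_unit by blast
  qed
  finally show ?thesis .
qed

lemma chr_set_snd_eq_0_if_parallel:
  assumes p: "prime p" and q: "prime q" and "p \<noteq> q" and X: "finite X" "X \<noteq> {}"
    and zero: "chr_set p q ((0, 0), d) X = 0"
    and v: "\<not> (q dvd fst v \<and> q dvd snd v)" and det: "q dvd det2 v d"
  shows "chr_set p q ((0, 0), v) X = 0"
proof -
  have swap: "chr_set q p (w, (0, 0)) (prod.swap ` X) = chr_set p q ((0, 0), w) X" for w
    using chr_set_swap[where w = "((0, 0), w)" and X = X and p = p and q = q] by simp
  have "chr_set q p (v, (0, 0)) (prod.swap ` X) = 0"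
    using X zero by (intro chr_set_fst_eq_0_if_parallel[OF q p not_sym[OF \<open>p \<noteq> q\<close>] _ _ _ v det])
      (simp_all add: swap)
  then show ?thesis by (simp add: swap)
qed

section \<open>Spectral duality and tiling\<close>

lemma sum_norm_gram_swap:
  fixes f :: "'a \<Rightarrow> 'b \<Rightarrow> complex"
  shows "(\<Sum>s\<in>B. \<Sum>s'\<in>B. (cmod (\<Sum>l\<in>A. f l s * cnj (f l s')))\<^sup>2)
       = (\<Sum>l\<in>A. \<Sum>m\<in>A. (cmod (\<Sum>s\<in>B. f l s * cnj (f m s)))\<^sup>2)"
proof -
  define g where "g s s' l m = f l s * cnj (f m s) * (cnj (f l s') * f m s')" for s s' l m
  have "complex_of_real (\<Sum>s\<in>B. \<Sum>s'\<in>B. (cmod (\<Sum>l\<in>A. f l s * cnj (f l s')))\<^sup>2)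
      = (\<Sum>s\<in>B. \<Sum>s'\<in>B. \<Sum>l\<in>A. \<Sum>m\<in>A. g s s' l m)"
    by (simp only: of_real_sum complex_norm_square) (simp add: g_def sum_product cnj_sum algebra_simps)
  also have "\<dots> = (\<Sum>l\<in>A. \<Sum>m\<in>A. \<Sum>s\<in>B. \<Sum>s'\<in>B. g s s' l m)"
    by (subst (2) sum.swap, subst sum.swap, subst (3) sum.swap, subst (2) sum.swap) (rule refl)
  also have "\<dots> = complex_of_real (\<Sum>l\<in>A. \<Sum>m\<in>A. (cmod (\<Sum>s\<in>B. f l s * cnj (f m s)))\<^sup>2)"
    by (simp only: of_real_sum complex_norm_square) (simp add: g_def sum_product cnj_sum algebra_simps)
  finally show ?thesis by (simp only: of_real_eq_iff)
qed

text \<open>In the Gram identity above both sides count \<open>|S|\<^sup>3\<close> on the diagonal, so the off-diagonal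
  terms on the \<open>S\<close>-side vanish as well.\<close>

lemma spectral_dual:
  assumes "p \<noteq> 0" "q \<noteq> 0" and S: "finite S" and L: "finite L" and card_L: "card L = card S"
    and orth: "\<forall>l\<in>L. \<forall>m\<in>L. l \<noteq> m \<longrightarrow> chr_set p q (gsub p q l m) S = 0"
  shows "\<forall>s\<in>S. \<forall>s'\<in>S. s \<noteq> s' \<longrightarrow> chr_set p q (gsub p q s s') L = 0"
proof -
  define N where "N = real (card S)"
  define f where "f l s = chr p q l s" for l s
  define A where "A l m = (\<Sum>s\<in>S. f l s * cnj (f m s))" for l m
  define B where "B s s' = (\<Sum>l\<in>L. f l s * cnj (f l s'))" for s s'
  have A_chr: "A l m = chr_set p q (gsub p q l m) S" for l m
    by (simp add: A_def chr_set_def f_def chr_gsub[OF assms(1,2)])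
  have B_chr: "B s s' = chr_set p q (gsub p q s s') L" for s s'
    by (simp add: B_def chr_set_def f_def chr_gsub[OF assms(1,2)] chr_commute[of p q s] chr_commute[of p q s'])
  have A_diag: "A l l = of_real N" and B_diag: "B s s = of_real N" for l s
    by (simp_all add: A_def B_def f_def N_def chr_norm card_L)
  have "(\<Sum>m\<in>L. (cmod (A l m))\<^sup>2) = N\<^sup>2" if "l \<in> L" for l
  proof -
    have "(\<Sum>m\<in>L. (cmod (A l m))\<^sup>2) = (cmod (A l l))\<^sup>2 + (\<Sum>m\<in>L - {l}. (cmod (A l m))\<^sup>2)"
      using L that by (simp add: sum.remove)
    also have "(\<Sum>m\<in>L - {l}. (cmod (A l m))\<^sup>2) = 0"
      using orth that by (intro sum.neutral) (auto simp: A_chr)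
    finally show ?thesis by (simp add: A_diag N_def)
  qed
  then have "(\<Sum>l\<in>L. \<Sum>m\<in>L. (cmod (A l m))\<^sup>2) = N ^ 3"
    by (simp add: card_L N_def power3_eq_cube power2_eq_square)
  moreover have "(\<Sum>s'\<in>S. (cmod (B s s'))\<^sup>2) = N\<^sup>2 + (\<Sum>s'\<in>S - {s}. (cmod (B s s'))\<^sup>2)" if "s \<in> S" for s
    using S that by (simp add: sum.remove B_diag N_def)
  then have "(\<Sum>s\<in>S. \<Sum>s'\<in>S. (cmod (B s s'))\<^sup>2) = N ^ 3 + (\<Sum>s\<in>S. \<Sum>s'\<in>S - {s}. (cmod (B s s'))\<^sup>2)"
    by (simp add: sum.distrib N_def power3_eq_cube power2_eq_square)
  ultimately have "(\<Sum>s\<in>S. \<Sum>s'\<in>S - {s}. (cmod (B s s'))\<^sup>2) = 0"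
    using sum_norm_gram_swap[where f = f and A = L and B = S] by (simp add: A_def B_def)
  then have "\<forall>s\<in>S. \<forall>s'\<in>S - {s}. (cmod (B s s'))\<^sup>2 = 0"
    using S by (simp add: sum_nonneg_eq_0_iff sum_nonneg)
  then show ?thesis by (auto simp: B_chr)
qed

lemma det2_gsub:
  "det2 u (fst (gsub p q y y')) = det2 u (fst y) - det2 u (fst y')
     - p * (fst u * ((snd (fst y) - snd (fst y')) div p) - snd u * ((fst (fst y) - fst (fst y')) div p))"
  "det2 v (snd (gsub p q y y')) = det2 v (snd y) - det2 v (snd y')
     - q * (fst v * ((snd (snd y) - snd (snd y')) div q) - snd v * ((fst (snd y) - fst (snd y')) div q))"
  by (simp_all add: gsub_def det2_def flip: minus_mult_div_eq_mod) (simp_all add: algebra_simps)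

lemma inj_on_det2_if_orthogonal:
  assumes p: "prime p" and q: "prime q" and "p \<noteq> q" and X: "finite X" and card_X: "card X = nat (p * q)"
    and orth: "\<forall>y\<in>Y. \<forall>y'\<in>Y. y \<noteq> y' \<longrightarrow> chr_set p q (gsub p q y y') X = 0"
    and u: "\<not> (p dvd fst u \<and> p dvd snd u)" "chr_set p q (u, (0, 0)) X \<noteq> 0"
    and v: "\<not> (q dvd fst v \<and> q dvd snd v)" "chr_set p q ((0, 0), v) X \<noteq> 0"
  shows "inj_on (\<lambda>y. (det2 u (fst y) mod p, det2 v (snd y) mod q)) Y"
proof (rule inj_onI, rule ccontr)
  fix y y' assume y: "y \<in> Y" "y' \<in> Y" "y \<noteq> y'"
    and eq: "(det2 u (fst y) mod p, det2 v (snd y) mod q) = (det2 u (fst y') mod p, det2 v (snd y') mod q)"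
  define d where "d = gsub p q y y'"
  have "p * q > 0" using p q by (simp add: prime_gt_0_int)
  then have "X \<noteq> {}" using card_X by auto
  have "p dvd det2 u (fst y) - det2 u (fst y')" "q dvd det2 v (snd y) - det2 v (snd y')"
    using eq by (simp_all add: mod_eq_dvd_iff)
  then have det_u: "p dvd det2 u (fst d)" and det_v: "q dvd det2 v (snd d)"
    by (simp_all add: d_def det2_gsub dvd_diff)
  have "chr_set p q d X = 0" using orth y by (simp add: d_def)
  then consider "chr_set p q (fst d, (0, 0)) X = 0" | "chr_set p q ((0, 0), snd d) X = 0"
    using chr_set_eq_0_split[OF p q \<open>p \<noteq> q\<close> X card_X] by blast
  then show False
  proof cases
    case 1
    then have "chr_set p q (u, (0, 0)) X = 0"
      by (rule chr_set_fst_eq_0_if_parallel[OF p q \<open>p \<noteq> q\<close> X \<open>X \<noteq> {}\<close> _ u(1) det_u])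
    then show False using u(2) by contradiction
  next
    case 2
    then have "chr_set p q ((0, 0), v) X = 0"
      by (rule chr_set_snd_eq_0_if_parallel[OF p q \<open>p \<noteq> q\<close> X \<open>X \<noteq> {}\<close> _ v(1) det_v])
    then show False using v(2) by contradiction
  qed
qed

definition line_prod :: "int \<Rightarrow> int \<Rightarrow> int \<times> int \<Rightarrow> int \<times> int \<Rightarrow> elt set" where
  "line_prod p q u v = (\<lambda>(t, s). ((t * fst u mod p, t * snd u mod p), (s * fst v mod q, s * snd v mod q)))
     ` ({0..<p} \<times> {0..<q})"

lemma prime_dvd_scalar_if_dvd_multiples:
  fixes p :: int
  assumes "prime p" "\<not> (p dvd fst u \<and> p dvd snd u)" "p dvd c * fst u" "p dvd c * snd u"
  shows "p dvd c"
  using assms by (auto simp: prime_dvd_mult_iff)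

lemma eq_if_dvd_diff_bounded:
  fixes a b p :: int
  assumes "0 \<le> a" "a < p" "0 \<le> b" "b < p" "p dvd a - b"
  shows "a = b"
proof -
  have "a mod p = b mod p" using assms(5) by (simp add: mod_eq_dvd_iff)
  then show ?thesis using assms(1-4) by simp
qed

lemma card_line_prod:
  assumes p: "prime p" and q: "prime q"
    and u: "\<not> (p dvd fst u \<and> p dvd snd u)" and v: "\<not> (q dvd fst v \<and> q dvd snd v)"
  shows "card (line_prod p q u v) = nat (p * q)"
proof -
  have "inj_on (\<lambda>(t, s). ((t * fst u mod p, t * snd u mod p), (s * fst v mod q, s * snd v mod q)))
      ({0..<p} \<times> {0..<q})"
  proof (rule inj_onI)
    fix a b assume ab: "a \<in> {0..<p} \<times> {0..<q}" "b \<in> {0..<p} \<times> {0..<q}"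
      and eq: "(\<lambda>(t, s). ((t * fst u mod p, t * snd u mod p), (s * fst v mod q, s * snd v mod q))) a
        = (\<lambda>(t, s). ((t * fst u mod p, t * snd u mod p), (s * fst v mod q, s * snd v mod q))) b"
    obtain t s t' s' where ts: "a = (t, s)" "b = (t', s')" by fastforce
    have "t * fst u mod p = t' * fst u mod p" "t * snd u mod p = t' * snd u mod p"
      "s * fst v mod q = s' * fst v mod q" "s * snd v mod q = s' * snd v mod q"
      using eq by (simp_all add: ts)
    then have "p dvd (t - t') * fst u" "p dvd (t - t') * snd u"
      "q dvd (s - s') * fst v" "q dvd (s - s') * snd v"
      by (simp_all add: mod_eq_dvd_iff left_diff_distrib)
    then have dvds: "p dvd t - t'" "q dvd s - s'"
      using prime_dvd_scalar_if_dvd_multiples[OF p u] prime_dvd_scalar_if_dvd_multiples[OF q v] by blast+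
    have bounds: "0 \<le> t" "t < p" "0 \<le> t'" "t' < p" "0 \<le> s" "s < q" "0 \<le> s'" "s' < q"
      using ab by (simp_all add: ts)
    have "t = t'" using bounds(1-4) dvds(1) by (rule eq_if_dvd_diff_bounded)
    moreover have "s = s'" using bounds(5-8) dvds(2) by (rule eq_if_dvd_diff_bounded)
    ultimately show "a = b" by (simp add: ts)
  qed
  then have "card (line_prod p q u v) = card ({0..<p} \<times> {0..<q})"
    unfolding line_prod_def by (rule card_image)
  then show ?thesis
    using prime_gt_0_int[OF p] prime_gt_0_int[OF q] by (simp add: card_cartesian_product nat_mult_distrib)
qed

lemma mod_add_scaled_eq:
  fixes a b c h m :: int
  assumes "m dvd h - a - b * c" "0 \<le> h" "h < m"
  shows "(a + b mod m * c mod m) mod m = h"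
proof -
  have "(a + b mod m * c mod m) mod m = (a + b * c) mod m"
    by (metis mod_add_right_eq mod_mult_left_eq)
  also have "\<dots> = h mod m"
  proof -
    have "(a + b * c) - h = - (h - a - b * c)" by simp
    then have "m dvd (a + b * c) - h" using assms(1) by (simp only: dvd_minus_iff)
    then show ?thesis by (simp add: mod_eq_dvd_iff)
  qed
  finally show ?thesis using assms(2,3) by simp
qed

lemma gadd_line_prod_if_det2_cong:
  assumes p: "prime p" and q: "prime q"
    and u: "\<not> (p dvd fst u \<and> p dvd snd u)" and v: "\<not> (q dvd fst v \<and> q dvd snd v)"
    and g: "g \<in> grp p q"
    and det_u: "det2 u (fst g) mod p = det2 u (fst y) mod p"
    and det_v: "det2 v (snd g) mod q = det2 v (snd y) mod q"
  obtains k where "k \<in> line_prod p q u v" "gadd p q y k = g"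
proof -
  have p0: "p > 0" and q0: "q > 0" using p q by (simp_all add: prime_gt_0_int)
  define e where "e = (fst (fst g) - fst (fst y), snd (fst g) - snd (fst y))"
  define f where "f = (fst (snd g) - fst (snd y), snd (snd g) - snd (snd y))"
  have "p dvd det2 u (fst g) - det2 u (fst y)" "q dvd det2 v (snd g) - det2 v (snd y)"
    using det_u det_v by (simp_all add: mod_eq_dvd_iff)
  moreover have "det2 u e = det2 u (fst g) - det2 u (fst y)" "det2 v f = det2 v (snd g) - det2 v (snd y)"
    by (simp_all add: det2_def e_def f_def algebra_simps)
  ultimately have "p dvd det2 u e" "q dvd det2 v f" by simp_all
  then obtain t s where t: "p dvd fst e - t * fst u" "p dvd snd e - t * snd u"
    and s: "q dvd fst f - s * fst v" "q dvd snd f - s * snd v"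
    using parallel_if_det2_dvd[OF p u] parallel_if_det2_dvd[OF q v] by metis
  define k where
    "k = ((t mod p * fst u mod p, t mod p * snd u mod p), (s mod q * fst v mod q, s mod q * snd v mod q))"
  have "k \<in> line_prod p q u v" using p0 q0 by (force simp: k_def line_prod_def)
  moreover have "(fst (fst y) + t mod p * fst u mod p) mod p = fst (fst g)"
    "(snd (fst y) + t mod p * snd u mod p) mod p = snd (fst g)"
    using t g by (auto simp: e_def grp_def intro!: mod_add_scaled_eq)
  moreover have "(fst (snd y) + s mod q * fst v mod q) mod q = fst (snd g)"
    "(snd (snd y) + s mod q * snd v mod q) mod q = snd (snd g)"
    using s g by (auto simp: f_def grp_def intro!: mod_add_scaled_eq)
  ultimately show thesis using that by (simp add: gadd_def k_def prod_eq_iff)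
qed

lemma tile_if_inj_on_det2:
  assumes p: "prime p" and q: "prime q"
    and u: "\<not> (p dvd fst u \<and> p dvd snd u)" and v: "\<not> (q dvd fst v \<and> q dvd snd v)"
    and Y: "Y \<subseteq> grp p q" "card Y = nat (p * q)"
    and inj: "inj_on (\<lambda>y. (det2 u (fst y) mod p, det2 v (snd y) mod q)) Y"
  shows "tile p q Y"
proof -
  define \<Phi> where "\<Phi> y = (det2 u (fst y) mod p, det2 v (snd y) mod q)" for y :: elt
  have p0: "p > 0" and q0: "q > 0" using p q by (simp_all add: prime_gt_0_int)
  have "\<Phi> ` Y \<subseteq> {0..<p} \<times> {0..<q}" using p0 q0 by (auto simp: \<Phi>_def)
  moreover have "card (\<Phi> ` Y) = card ({0..<p} \<times> {0..<q})"
    using inj Y(2) p0 q0 by (simp add: \<Phi>_def card_image card_cartesian_product nat_mult_distrib)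
  ultimately have \<Phi>_Y: "\<Phi> ` Y = {0..<p} \<times> {0..<q}" by (intro card_subset_eq) simp_all
  have "{gadd p q y k |y k. y \<in> Y \<and> k \<in> line_prod p q u v} = grp p q"
  proof (intro equalityI subsetI)
    fix g assume "g \<in> {gadd p q y k |y k. y \<in> Y \<and> k \<in> line_prod p q u v}"
    then obtain y k where "g = gadd p q y k" by blast
    then show "g \<in> grp p q" using p0 q0 by (simp add: gadd_def grp_def)
  next
    fix g assume g: "g \<in> grp p q"
    have "\<Phi> g \<in> \<Phi> ` Y" unfolding \<Phi>_Y using p0 q0 by (simp add: \<Phi>_def)
    then obtain y where y: "y \<in> Y" "\<Phi> g = \<Phi> y" by blast
    then have "det2 u (fst g) mod p = det2 u (fst y) mod p" "det2 v (snd g) mod q = det2 v (snd y) mod q"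
      by (simp_all add: \<Phi>_def)
    then obtain k where "k \<in> line_prod p q u v" "gadd p q y k = g"
      by (rule gadd_line_prod_if_det2_cong[OF p q u v g])
    then show "g \<in> {gadd p q y k |y k. y \<in> Y \<and> k \<in> line_prod p q u v}" using y(1) by blast
  qed
  moreover have "line_prod p q u v \<subseteq> grp p q" using p0 q0 by (auto simp: line_prod_def grp_def)
  moreover have "card Y * card (line_prod p q u v) = card (grp p q)"
    using Y(2) card_line_prod[OF p q u v] p0 q0
    by (simp add: grp_def card_cartesian_product nat_mult_distrib)
  ultimately show ?thesis unfolding tile_def by blast
qed

theorem proposition4p3:
  fixes p q :: int and S :: "elt set"
  assumes "prime p" and "prime q" and "p \<noteq> q"
    and "S \<subseteq> grp p q"
    and "spectral p q S"
    and "card S = nat (p * q)"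
  shows "tile p q S"
proof -
  have "p * q > 0" using assms(1,2) by (simp add: prime_gt_0_int)
  then have "card S > 0" using assms(6) by simp
  then have S: "finite S" by (rule card_ge_0_finite)
  obtain L where L: "card L = card S" "\<forall>l\<in>L. \<forall>m\<in>L. l \<noteq> m \<longrightarrow> chr_set p q (gsub p q l m) S = 0"
    using assms(5) unfolding spectral_def by blast
  have card_L: "card L = nat (p * q)" using L(1) assms(6) by simp
  have finite_L: "finite L" using L(1) \<open>card S > 0\<close> by (intro card_ge_0_finite) simp
  have p0: "p \<noteq> 0" and q0: "q \<noteq> 0" using assms(1,2) by auto
  have orth: "\<forall>s\<in>S. \<forall>s'\<in>S. s \<noteq> s' \<longrightarrow> chr_set p q (gsub p q s s') L = 0"
    by (rule spectral_dual[OF p0 q0 S finite_L L])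
  obtain u where u: "\<not> (p dvd fst u \<and> p dvd snd u)" "chr_set p q (u, (0, 0)) L \<noteq> 0"
    using exists_chr_set_fst_nonzero[OF assms(1-3) finite_L card_L] .
  obtain v where v: "\<not> (q dvd fst v \<and> q dvd snd v)" "chr_set p q ((0, 0), v) L \<noteq> 0"
    using exists_chr_set_snd_nonzero[OF assms(1-3) finite_L card_L] .
  have "inj_on (\<lambda>y. (det2 u (fst y) mod p, det2 v (snd y) mod q)) S"
    by (rule inj_on_det2_if_orthogonal[OF assms(1-3) finite_L card_L orth u v])
  then show ?thesis by (rule tile_if_inj_on_det2[OF assms(1,2) u(1) v(1) assms(4,6)])
qed

end
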